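(* Let $w>1$ and $W=\begin{bmatrix}1&w\\0&1\end{bmatrix}$, and suppose the first token is fixed at $(0,1)$. Define the second-token dynamics on $\mathbb{S}^1$ by $$x^{(t+1)}=\frac{\tfrac12(0,1)W+\tfrac12 x^{(t)}W}{\big\|\tfrac12(0,1)W+\tfrac12 x^{(t)}W\big\|_2}.$$ Then the arc $\{x\in\mathbb{S}^1: x_1\le -1/w\}$ is invariant, and if $x^{(0)}\in\mathbb{S}^1$ satisfies $x^{(0)}_1<-1/w$, then $x^{(t)}\to B=\big(-\tfrac1w,-\sqrt{1-\tfrac1{w^2}}\big)$ as $t\to\infty$. In particular, for such initial data the two tokens $(0,1)$ and $B$ are linearly independent in the limit. (This is the LayerNorm self-attention dynamics with $N=d=2$, causal mask, $W_Q=W_K=0$, so that the attention matrix is $\begin{bmatrix}1&0\\1/2&1/2\end{bmatrix}$, and $W_V=W$.)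
   Context: $\mathbb{S}^1$ is the unit circle in $\mathbb{R}^2$; vectors are row vectors multiplied on the right by $W$. *)

theory Defs
  imports "HOL-Analysis.Analysis"
begin

text \<open>Row vectors in R^2 are real^2; a row vector x is multiplied on the right by W via x v* W.\<close>

definition Wmat :: "real \<Rightarrow> real^2^2" where
  "Wmat w = vector [vector [1, w], vector [0, 1]]"

definition tok1 :: "real^2" where
  "tok1 = vector [0, 1]"

definition step :: "real \<Rightarrow> real^2 \<Rightarrow> real^2" where
  "step w x = (let y = (1/2) *\<^sub>R (tok1 v* Wmat w) + (1/2) *\<^sub>R (x v* Wmat w)
               in (1 / norm y) *\<^sub>R y)"

definition Bpt :: "real \<Rightarrow> real^2" where
  "Bpt w = vector [-1/w, - sqrt (1 - 1/w^2)]"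

end

theory Submission
  imports Defs
begin

text \<open>On the left half circle a point is determined by its slope \<open>m = x\<^sub>2 / x\<^sub>1\<close>, and one step
of the dynamics acts on slopes by \<open>m \<mapsto> m + w - sqrt (1 + m\<^sup>2)\<close>. The arc \<open>x\<^sub>1 \<le> -1/w\<close> is the
slope interval \<open>[-c, c]\<close> with \<open>c = sqrt (w\<^sup>2 - 1)\<close>; this map sends it into itself and never
decreases slopes there, because \<open>sqrt (1 + m\<^sup>2) \<le> w\<close>. Its only fixed points are \<open>\<plusminus>c\<close>, so slopes
starting in \<open>(-c, c]\<close> increase to \<open>c\<close>, which is the slope of \<open>B\<close>.\<close>

lemma norm_vec2: "norm (v::real^2) = sqrt (v$1^2 + v$2^2)"
  by (simp add: norm_vec_def L2_set_def sum_2)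

lemma sphere_vec2_iff: "(v::real^2) \<in> sphere 0 1 \<longleftrightarrow> v$1^2 + v$2^2 = 1"
  by (simp add: norm_vec2)

definition slope_map :: "real \<Rightarrow> real \<Rightarrow> real" where
  "slope_map w m = m + w - sqrt (1 + m^2)"

lemma slope_map_bounds:
  fixes w m :: real
  assumes w: "w > 1" and m: "\<bar>m\<bar> \<le> sqrt (w^2 - 1)"
  shows "m \<le> slope_map w m" and "slope_map w m \<le> sqrt (w^2 - 1)"
proof -
  define c where "c = sqrt (w^2 - 1)"
  have "1 < w^2" using w by (simp add: power2_eq_square less_1_mult)
  then have c0: "c \<ge> 0" and cc: "c^2 = w^2 - 1" by (simp_all add: c_def)
  have "\<bar>m\<bar> \<le> \<bar>c\<bar>" using m c0 by (simp add: c_def)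
  then have "m^2 \<le> c^2" by (simp only: abs_le_square_iff)
  then have "sqrt (1 + m^2) \<le> sqrt (w^2)" using cc by (simp only: real_sqrt_le_iff)
  then show "m \<le> slope_map w m" using w by (simp add: slope_map_def)
  have "c \<le> w" using w c0 cc by (smt (verit) power_mono)
  have "m \<le> c" using m c_def by linarith
  \<comment> \<open>uses \<open>(w - c) (w + c) = 1\<close>\<close>
  have "(m + w - c)^2 = m^2 + 1 + 2 * (m - c) * (w - c)"
    using cc by (simp add: power2_eq_square algebra_simps)
  also have "\<dots> \<le> 1 + m^2"
    using \<open>m \<le> c\<close> \<open>c \<le> w\<close> by (simp add: mult_nonpos_nonneg)
  finally have "m + w - c \<le> sqrt (1 + m^2)" by (rule real_le_rsqrt)
  then show "slope_map w m \<le> sqrt (w^2 - 1)" by (simp add: slope_map_def c_def)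
qed

lemma slope_map_fixed_point:
  assumes "w > 1" and "slope_map w L = L"
  shows "\<bar>L\<bar> = sqrt (w^2 - 1)"
proof -
  have "sqrt (1 + L^2) = sqrt (w^2)" using assms by (simp add: slope_map_def)
  then have "1 + L^2 = w^2" by (simp only: real_sqrt_eq_iff)
  then have "L^2 = w^2 - 1" by simp
  then show ?thesis by (metis real_sqrt_abs)
qed

definition slope :: "real^2 \<Rightarrow> real" where
  "slope v = v$2 / v$1"

lemma sqrt_one_plus_slope_sq:
  assumes "v$1 < 0" and "v$1^2 + v$2^2 = 1"
  shows "sqrt (1 + (slope v)^2) = -1 / v$1"
proof -
  have "1 + (slope v)^2 = (1 / v$1)^2" using assms by (simp add: slope_def field_simps)
  then show ?thesis using assms(1) by simp
qed

lemma semicircle_le_iff_slope: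
  assumes a: "v$1 < 0" and ab: "v$1^2 + v$2^2 = 1" and w: "w > 0"
  shows "v$1 \<le> -1/w \<longleftrightarrow> \<bar>slope v\<bar> \<le> sqrt (w^2 - 1)"
    and "v$1 < -1/w \<longleftrightarrow> \<bar>slope v\<bar> < sqrt (w^2 - 1)"
proof -
  note s = sqrt_one_plus_slope_sq[OF a ab]
  have "v$1 \<le> -1/w \<longleftrightarrow> -1/v$1 \<le> w" using a w by (simp add: field_simps)
  also have "\<dots> \<longleftrightarrow> sqrt (1 + (slope v)^2) \<le> sqrt (w^2)" using w s by simp
  also have "\<dots> \<longleftrightarrow> (slope v)^2 \<le> w^2 - 1" by (simp only: real_sqrt_le_iff) arith
  also have "\<dots> \<longleftrightarrow> \<bar>slope v\<bar> \<le> sqrt (w^2 - 1)"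
    by (simp only: real_sqrt_abs[symmetric] real_sqrt_le_iff)
  finally show "v$1 \<le> -1/w \<longleftrightarrow> \<bar>slope v\<bar> \<le> sqrt (w^2 - 1)" .
  have "v$1 < -1/w \<longleftrightarrow> -1/v$1 < w" using a w by (simp add: field_simps)
  also have "\<dots> \<longleftrightarrow> sqrt (1 + (slope v)^2) < sqrt (w^2)" using w s by simp
  also have "\<dots> \<longleftrightarrow> (slope v)^2 < w^2 - 1" by (simp only: real_sqrt_less_iff) arith
  also have "\<dots> \<longleftrightarrow> \<bar>slope v\<bar> < sqrt (w^2 - 1)"
    by (simp only: real_sqrt_abs[symmetric] real_sqrt_less_iff)
  finally show "v$1 < -1/w \<longleftrightarrow> \<bar>slope v\<bar> < sqrt (w^2 - 1)" .
qed

lemma step_components: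
  fixes v :: "real^2" and w :: real
  defines "q \<equiv> v$1 * w + v$2 + 1"
  shows "step w v $ 1 = v$1 / sqrt (v$1^2 + q^2)"
    and "step w v $ 2 = q / sqrt (v$1^2 + q^2)"
proof -
  define y where "y = (1/2) *\<^sub>R (tok1 v* Wmat w) + (1/2) *\<^sub>R (v v* Wmat w)"
  have y1: "y $ 1 = v$1/2" and y2: "y $ 2 = q/2"
    by (simp_all add: y_def q_def vector_matrix_mult_def sum_2 tok1_def Wmat_def algebra_simps)
  have "norm y = sqrt (v$1^2 + q^2) / 2"
    unfolding norm_vec2 y1 y2 by (simp add: power_divide real_sqrt_divide add_divide_distrib[symmetric])
  moreover have "step w v = (1 / norm y) *\<^sub>R y" by (simp add: step_def y_def Let_def)
  ultimately show "step w v $ 1 = v$1 / sqrt (v$1^2 + q^2)"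
    and "step w v $ 2 = q / sqrt (v$1^2 + q^2)" by (simp_all add: y1 y2)
qed

lemma step_left_semicircle:
  assumes a: "v$1 < 0" and ab: "v$1^2 + v$2^2 = 1"
  shows "step w v $ 1 < 0" and "(step w v $ 1)^2 + (step w v $ 2)^2 = 1"
    and "slope (step w v) = slope_map w (slope v)"
proof -
  define q where "q = v$1 * w + v$2 + 1"
  define S where "S = sqrt (v$1^2 + q^2)"
  have "v$1^2 + q^2 > 0" using a by (simp add: add_pos_nonneg)
  then have S0: "S > 0" and S2: "S^2 = v$1^2 + q^2" unfolding S_def by simp_all
  have c1: "step w v $ 1 = v$1 / S" and c2: "step w v $ 2 = q / S"
    using step_components[where v=v and w=w] unfolding q_def S_def by simp_all
  show "step w v $ 1 < 0" using c1 S0 a by (simp add: divide_neg_pos)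
  show "(step w v $ 1)^2 + (step w v $ 2)^2 = 1"
    using c1 c2 S0 S2 a by (simp add: power_divide add_divide_distrib[symmetric])
  have "slope (step w v) = q / v$1" using c1 c2 S0 by (simp add: slope_def)
  also have "\<dots> = slope v + w + 1 / v$1" using a by (simp add: q_def slope_def field_simps)
  finally show "slope (step w v) = slope_map w (slope v)"
    using sqrt_one_plus_slope_sq[OF a ab] by (simp add: slope_map_def)
qed

lemma step_preserves_arc:
  assumes w: "w > 1" and y: "y \<in> sphere 0 1" "y $ 1 \<le> -1/w"
  shows "step w y \<in> sphere 0 1" and "step w y $ 1 \<le> -1/w"
proof -
  have "1/w > 0" using w by simp
  then have a: "y$1 < 0" using y(2) by linarith
  have ab: "y$1^2 + y$2^2 = 1" using y(1) sphere_vec2_iff by blast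
  show "step w y \<in> sphere 0 1" using step_left_semicircle(2)[OF a ab] sphere_vec2_iff by blast
  have "\<bar>slope y\<bar> \<le> sqrt (w^2 - 1)" using semicircle_le_iff_slope(1)[OF a ab] w y(2) by simp
  then have "\<bar>slope_map w (slope y)\<bar> \<le> sqrt (w^2 - 1)"
    using slope_map_bounds[OF w] by (smt (verit))
  then show "step w y $ 1 \<le> -1/w"
    using semicircle_le_iff_slope(1)[OF step_left_semicircle(1,2)[OF a ab]] w
    by (simp add: step_left_semicircle(3)[OF a ab])
qed

lemma slope_map_iterates_tendsto:
  fixes m :: "nat \<Rightarrow> real"
  assumes w: "w > 1" and rec: "\<And>t. m (Suc t) = slope_map w (m t)"
    and m0: "\<bar>m 0\<bar> < sqrt (w^2 - 1)"
  shows "m \<longlonglongrightarrow> sqrt (w^2 - 1)"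
proof -
  define c where "c = sqrt (w^2 - 1)"
  have bounded: "\<bar>m t\<bar> \<le> c" for t
  proof (induction t)
    case (Suc t)
    then show ?case using slope_map_bounds[OF w, of "m t"] by (simp add: rec c_def)
  qed (use m0 c_def in simp)
  have "incseq m"
    by (rule incseq_SucI) (use slope_map_bounds(1)[OF w] bounded in \<open>simp add: rec c_def\<close>)
  then obtain L where L: "m \<longlonglongrightarrow> L" "\<And>t. m t \<le> L"
    using incseq_convergent[of m c] bounded abs_le_D1 by blast
  have "(\<lambda>t. slope_map w (m t)) \<longlonglongrightarrow> slope_map w L"
    unfolding slope_map_def by (intro tendsto_intros L(1))
  moreover have "(\<lambda>t. slope_map w (m t)) \<longlonglongrightarrow> L"
    using LIMSEQ_Suc[OF L(1)] by (simp add: rec)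
  ultimately have "\<bar>L\<bar> = c"
    using slope_map_fixed_point[OF w] LIMSEQ_unique c_def by metis
  moreover have "L > -c" using L(2)[of 0] m0 c_def by linarith
  ultimately show ?thesis using L(1) c_def by (simp add: abs_if split: if_splits)
qed

lemma Bpt_components: "Bpt w $ 1 = -1/w" "Bpt w $ 2 = - sqrt (1 - 1/w^2)"
  by (simp_all add: Bpt_def)

lemma tendsto_Bpt_of_slope:
  fixes x :: "nat \<Rightarrow> real^2"
  assumes w: "w > 1" and a: "\<And>t. x t $ 1 < 0" and ab: "\<And>t. x t $ 1^2 + x t $ 2^2 = 1"
    and lim: "(\<lambda>t. slope (x t)) \<longlonglongrightarrow> sqrt (w^2 - 1)"
  shows "x \<longlonglongrightarrow> Bpt w"
proof (rule vec_tendstoI)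
  have x1: "x t $ 1 = -1 / sqrt (1 + (slope (x t))^2)" for t
    using a[of t] by (simp add: sqrt_one_plus_slope_sq[OF a ab])
  have x2: "x t $ 2 = slope (x t) * x t $ 1" for t using a[of t] by (simp add: slope_def)
  have "1 < w^2" using w by (simp add: power2_eq_square less_1_mult)
  then have "sqrt (1 + (sqrt (w^2 - 1))^2) = w" using w by simp
  moreover have "(\<lambda>t. -1 / sqrt (1 + (slope (x t))^2)) \<longlonglongrightarrow> -1 / sqrt (1 + (sqrt (w^2 - 1))^2)"
    by (intro tendsto_intros lim) (use \<open>1 < w^2\<close> w in simp)
  ultimately have l1: "(\<lambda>t. x t $ 1) \<longlonglongrightarrow> -1/w" unfolding x1 by simp
  have l2: "(\<lambda>t. x t $ 2) \<longlonglongrightarrow> sqrt (w^2 - 1) * (-1/w)"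
    unfolding x2 using lim l1 by (rule tendsto_mult)
  have "sqrt (w^2 - 1) / w = sqrt ((w^2 - 1) / w^2)"
    using w by (simp add: real_sqrt_divide)
  also have "(w^2 - 1) / w^2 = 1 - 1/w^2" using w by (simp add: field_simps)
  finally have "sqrt (w^2 - 1) / w = sqrt (1 - 1/w^2)" .
  then show "(\<lambda>t. x t $ i) \<longlonglongrightarrow> Bpt w $ i" for i
    using exhaust_2[of i] l1 l2 by (auto simp: Bpt_components)
qed

lemma step_orbit_tendsto_Bpt:
  fixes x :: "nat \<Rightarrow> real^2"
  assumes w: "w > 1" and rec: "\<And>t. x (Suc t) = step w (x t)"
    and x0: "x 0 \<in> sphere 0 1" "x 0 $ 1 < -1/w"
  shows "x \<longlonglongrightarrow> Bpt w"
proof -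
  have arc: "x t \<in> sphere 0 1 \<and> x t $ 1 \<le> -1/w" for t
    by (induction t) (use x0 step_preserves_arc[OF w] rec in auto)
  have "1/w > 0" using w by simp
  then have a: "x t $ 1 < 0" for t using arc[of t] by linarith
  have ab: "x t $ 1^2 + x t $ 2^2 = 1" for t using arc[of t] sphere_vec2_iff by blast
  have "(\<lambda>t. slope (x t)) \<longlonglongrightarrow> sqrt (w^2 - 1)"
  proof (rule slope_map_iterates_tendsto[OF w])
    show "slope (x (Suc t)) = slope_map w (slope (x t))" for t
      using step_left_semicircle(3)[OF a ab] by (simp add: rec)
    show "\<bar>slope (x 0)\<bar> < sqrt (w^2 - 1)"
      using semicircle_le_iff_slope(2)[OF a ab] w x0(2) by simp
  qed
  then show ?thesis by (rule tendsto_Bpt_of_slope[OF w a ab])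
qed

lemma independent_vec2_pair:
  fixes u v :: "real^2"
  assumes "u$1 = 0" "u \<noteq> 0" "v$1 \<noteq> 0"
  shows "independent {u, v}"
proof (rule independent_insertI)
  have "v \<noteq> 0" using assms(3) by auto
  then show "independent {v}" by (intro independent_insertI independent_empty) auto
  show "u \<notin> span {v}"
    using assms by (auto simp: span_singleton)
qed

theorem mainTheorem13:
  fixes w :: real and x :: "nat \<Rightarrow> real^2"
  assumes "w > 1"
    and "\<And>t. x (Suc t) = step w (x t)"
  shows "(\<forall>y \<in> sphere 0 1. y $ 1 \<le> -1/w \<longrightarrow>
            step w y \<in> sphere 0 1 \<and> step w y $ 1 \<le> -1/w)
       \<and> (x 0 \<in> sphere 0 1 \<and> x 0 $ 1 < -1/w \<longrightarrow>
            (x \<longlonglongrightarrow> Bpt w) \<and> tok1 \<noteq> Bpt w \<and> independent {tok1, Bpt w})"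
proof (intro conjI ballI impI)
  show "step w y \<in> sphere 0 1" "step w y $ 1 \<le> -1/w"
    if "y \<in> sphere 0 1" "y $ 1 \<le> -1/w" for y
    using step_preserves_arc[OF assms(1) that] by auto
  show "x \<longlonglongrightarrow> Bpt w" if "x 0 \<in> sphere 0 1 \<and> x 0 $ 1 < -1/w"
    using step_orbit_tendsto_Bpt[of w x] assms that by blast
  have tok1: "tok1 $ 1 = 0" "tok1 $ 2 = 1" by (simp_all add: tok1_def)
  have "Bpt w $ 1 \<noteq> 0" using assms(1) by (simp add: Bpt_components)
  then show "tok1 \<noteq> Bpt w" using tok1(1) by auto
  show "independent {tok1, Bpt w}"
    by (rule independent_vec2_pair)
      (use tok1 \<open>Bpt w $ 1 \<noteq> 0\<close> in \<open>auto simp: vec_eq_iff intro!: exI[where x=2]\<close>)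
qed

end
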